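(* Let $a,b$ be positive integers with $a > b > 0$, $\gcd(a,b)=1$ and $a \not\equiv b \pmod 2$, and put $$N_{1,7} = (a+b)^2 - 2b^2,\qquad N_{1,5} = a^2+b^2,\qquad N_{1,3} = (a-b)^2+2b^2 .$$ Then $N_{1,3}, N_{1,5}, N_{1,7}$ are pairwise relatively prime: $\gcd(N_{1,5},N_{1,7}) = \gcd(N_{1,3},N_{1,5}) = \gcd(N_{1,3},N_{1,7}) = 1$. *)

theory Defs
  imports Main
begin

end

theory Submission
  imports Defs
begin

text \<open>Any two of the three numbers differ by \<open>2 b (a - b)\<close> or \<open>4 b (a - b)\<close>, so a common
  divisor divides \<open>2 b (a - b)\<close>. But each number is odd, is \<open>\<equiv> a\<^sup>2\<close> modulo \<open>b\<close> and
  \<open>\<equiv> 2 b\<^sup>2\<close> modulo \<open>a - b\<close>, hence coprime to \<open>2 b (a - b)\<close>.\<close>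

lemma coprime_add_mult_right_iff:
  fixes m n k :: "'a::semiring_gcd"
  shows "coprime m (n + k * m) \<longleftrightarrow> coprime m n"
  by (metis add.commute coprime_iff_gcd_eq_1 gcd_add_mult)

lemma coprime_two_mult_b_diff:
  fixes a b N u s t :: int
  assumes "coprime a b" and "odd (a - b)"
    and "N = a\<^sup>2 + b\<^sup>2 + 2 * u" and "N = a\<^sup>2 + s * b" and "N = 2 * b\<^sup>2 + t * (a - b)"
  shows "coprime N (2 * b * (a - b))"
proof -
  have "odd (a\<^sup>2 + b\<^sup>2)"
    using assms(2) by (auto simp: power2_eq_square)
  then have "odd N"
    using assms(3) by simp
  moreover have "coprime N b"
    using assms(1,4) coprime_add_mult_right_iff [of b "a\<^sup>2" s]
    by (simp add: coprime_commute)
  moreover have "coprime (a - b) b"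
    using assms(1) coprime_add_mult_right_iff [of b "a - b" 1] by (simp add: coprime_commute)
  then have "coprime N (a - b)"
    using assms(2,5) coprime_add_mult_right_iff [of "a - b" "2 * b\<^sup>2" t]
    by (simp add: coprime_commute)
  ultimately show ?thesis
    by simp
qed

lemma coprime_if_diff_coprime:
  fixes M N :: int
  assumes "coprime M (N - M)"
  shows "coprime M N"
  using assms coprime_add_mult_right_iff [of M "N - M" 1] by simp

theorem theorem4p2:
  fixes a b :: int
  assumes "a > b" and "b > 0" and "gcd a b = 1" and "a mod 2 \<noteq> b mod 2"
  shows "gcd (a\<^sup>2 + b\<^sup>2) ((a + b)\<^sup>2 - 2 * b\<^sup>2) = 1
       \<and> gcd ((a - b)\<^sup>2 + 2 * b\<^sup>2) (a\<^sup>2 + b\<^sup>2) = 1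
       \<and> gcd ((a - b)\<^sup>2 + 2 * b\<^sup>2) ((a + b)\<^sup>2 - 2 * b\<^sup>2) = 1"
proof -
  define N5 N7 N3 where "N5 = a\<^sup>2 + b\<^sup>2" and "N7 = (a + b)\<^sup>2 - 2 * b\<^sup>2"
    and "N3 = (a - b)\<^sup>2 + 2 * b\<^sup>2"
  have ab: "coprime a b" "odd (a - b)"
    using assms(3,4) mod_eq_dvd_iff [of a 2 b] by (simp_all add: coprime_iff_gcd_eq_1)
  have N5: "coprime N5 (2 * b * (a - b))"
    by (rule coprime_two_mult_b_diff [OF ab, of _ 0 b "a + b"])
      (simp_all add: N5_def power2_eq_square algebra_simps)
  have N3: "coprime N3 (2 * b * (a - b))"
    by (rule coprime_two_mult_b_diff [OF ab, of _ "b * (b - a)" "3 * b - 2 * a" "a - b"])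
      (simp_all add: N3_def power2_eq_square algebra_simps)
  have diff: "N7 - N5 = 2 * b * (a - b)" "N5 - N3 = 2 * b * (a - b)"
    "N7 - N3 = 2 * (2 * b * (a - b))"
    by (simp_all add: N3_def N5_def N7_def power2_eq_square algebra_simps)
  have "coprime N5 N7" "coprime N3 N5" "coprime N3 N7"
    using N5 N3 coprime_if_diff_coprime [of N5 N7] coprime_if_diff_coprime [of N3 N5]
      coprime_if_diff_coprime [of N3 N7]
    by (simp_all only: diff coprime_mult_right_iff)
  then show ?thesis
    by (simp add: N3_def N5_def N7_def coprime_iff_gcd_eq_1 gcd.commute)
qed

end
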